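(* Let $\kappa\ge2$ and let $\psi^+$ be a rooted caterpillar tree on $n\ge1$ taxa. Then the dimension of the $\mathrm{UE}_\kappa(\psi^+)$ model (i.e., of its affine closure) is $$d_\kappa(\psi^+)=\frac{\kappa^n+\kappa}{2}-1.$$
   Context: For a rooted binary topological tree $\psi^+$ on $X$, $d_\kappa(\psi^+)$ is the dimension of the affine space of real $|X|$-way $\kappa\times\cdots\times\kappa$ tensors $P$ (one index per taxon) whose entries sum to 1 and such that for every $Y\subseteq X$ and every 2-clade $\{a,b\}$ of the induced rooted subtree $\psi^+|_Y$, the marginalization $P_Y$ is invariant under exchanging the $a$ and $b$ indices. A 2-clade is a pair of leaves that are exactly the leaf descendants of some vertex. A rooted caterpillar on $n$ taxa is a rooted binary tree in which every internal vertex has at least one leaf child (i.e., of the form $(x_1,(x_2,(\dots,(x_{n-1},x_n))))$). *)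

theory Defs
  imports "HOL-Analysis.Analysis" "HOL-Library.Function_Algebras"
begin

datatype 'a rtree = Leaf 'a | Node "'a rtree" "'a rtree"

fun leaves_list :: "'a rtree \<Rightarrow> 'a list" where
  "leaves_list (Leaf x) = [x]"
| "leaves_list (Node l r) = leaves_list l @ leaves_list r"

definition leaves :: "'a rtree \<Rightarrow> 'a set" where
  "leaves T = set (leaves_list T)"

definition valid_tree :: "'a rtree \<Rightarrow> bool" where
  "valid_tree T = distinct (leaves_list T)"

fun is_leaf :: "'a rtree \<Rightarrow> bool" where
  "is_leaf (Leaf x) = True"
| "is_leaf (Node l r) = False"

fun caterpillar :: "'a rtree \<Rightarrow> bool" where
  "caterpillar (Leaf x) = True"
| "caterpillar (Node l r) =
     ((is_leaf l \<or> is_leaf r) \<and> caterpillar l \<and> caterpillar r)"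

text \<open>Vertices of the tree, each represented by the subtree rooted there.\<close>
fun subtrees :: "'a rtree \<Rightarrow> 'a rtree set" where
  "subtrees (Leaf x) = {Leaf x}"
| "subtrees (Node l r) = insert (Node l r) (subtrees l \<union> subtrees r)"

definition two_clades :: "'a rtree \<Rightarrow> 'a set set" where
  "two_clades T = {C. \<exists>v \<in> subtrees T. C = leaves v \<and> card C = 2}"

text \<open>Induced rooted subtree on Y (degree-two vertices suppressed);
  None if Y contains no leaf of the tree.\<close>
fun induced :: "'a rtree \<Rightarrow> 'a set \<Rightarrow> 'a rtree option" where
  "induced (Leaf x) Y = (if x \<in> Y then Some (Leaf x) else None)"
| "induced (Node l r) Y =
     (case (induced l Y, induced r Y) of
        (None, None) \<Rightarrow> None
      | (Some l', None) \<Rightarrow> Some l'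
      | (None, Some r') \<Rightarrow> Some r'
      | (Some l', Some r') \<Rightarrow> Some (Node l' r'))"

definition two_clades_induced :: "'a rtree \<Rightarrow> 'a set \<Rightarrow> 'a set set" where
  "two_clades_induced T Y =
     (case induced T Y of None \<Rightarrow> {} | Some T' \<Rightarrow> two_clades T')"

text \<open>Index tuples of a kappa x ... x kappa tensor with one index per taxon in X.\<close>
definition idx :: "'a set \<Rightarrow> nat \<Rightarrow> ('a \<Rightarrow> nat) set" where
  "idx X \<kappa> = PiE X (\<lambda>_. {..<\<kappa>})"

text \<open>Real tensors on X, represented as functions on index tuples vanishing off idx X kappa.\<close>
definition is_tensor :: "'a set \<Rightarrow> nat \<Rightarrow> (('a \<Rightarrow> nat) \<Rightarrow> real) \<Rightarrow> bool" where
  "is_tensor X \<kappa> P = (\<forall>f. f \<notin> idx X \<kappa> \<longrightarrow> P f = 0)"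

definition marg :: "'a set \<Rightarrow> nat \<Rightarrow> (('a \<Rightarrow> nat) \<Rightarrow> real) \<Rightarrow> 'a set \<Rightarrow> ('a \<Rightarrow> nat) \<Rightarrow> real" where
  "marg X \<kappa> P Y g = (\<Sum>f \<in> {f \<in> idx X \<kappa>. restrict f Y = g}. P f)"

definition UE_model :: "nat \<Rightarrow> 'a rtree \<Rightarrow> (('a \<Rightarrow> nat) \<Rightarrow> real) set" where
  "UE_model \<kappa> T = {P. is_tensor (leaves T) \<kappa> P
      \<and> (\<Sum>f \<in> idx (leaves T) \<kappa>. P f) = 1
      \<and> (\<forall>Y \<subseteq> leaves T. \<forall>C \<in> two_clades_induced T Y. \<forall>a b. C = {a, b} \<longrightarrow>
           (\<forall>g \<in> idx Y \<kappa>. marg (leaves T) \<kappa> P Y g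
                            = marg (leaves T) \<kappa> P Y (g(a := g b, b := g a))))}"

text \<open>Dimension of an affine space S: dimension of the linear span of its difference vectors.\<close>
definition affine_dimension :: "(('a \<Rightarrow> nat) \<Rightarrow> real) set \<Rightarrow> nat" where
  "affine_dimension S =
     vector_space.dim (\<lambda>c (P :: ('a \<Rightarrow> nat) \<Rightarrow> real). (\<lambda>f. c * P f))
       {P - Q | P Q. P \<in> S \<and> Q \<in> S}"

definition d_kappa :: "nat \<Rightarrow> 'a rtree \<Rightarrow> nat" where
  "d_kappa \<kappa> T = affine_dimension (UE_model \<kappa> T)"

end

theory Submission
  imports Defs
begin

text \<open>List the leaves of the caterpillar from the root downwards as x_1, ..., x_n. Every induced
  subtree is again a caterpillar whose only 2-clade consists of the last two of its taxa in this
  order, so the model consists of the tensors whose marginal on any Y is symmetric in the last two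
  elements of Y. Relabelling by the transposition of x_(n-1) and x_n shows that it suffices to
  impose these constraints for the prefixes Y = {x_1, ..., x_k}.

  Marginalising out x_n maps the resulting linear space U_n onto U_(n-1), and the tensors symmetric
  in x_(n-1), x_n onto all tensors on n-1 taxa, with the same kernel in both cases; extending a
  tensor along the diagonal x_n = x_(n-1) is a common right inverse. The symmetric tensors have
  dimension (\<kappa>^n + \<kappa>^(n-1))/2, hence dim U_n = dim U_(n-1) + (\<kappa>^n - \<kappa>^(n-1))/2, and with
  dim U_1 = \<kappa> this gives 2 dim U_n = \<kappa>^n + \<kappa>. Fixing the entry sum to 1 removes one dimension.\<close>

section \<open>Dimension and retractions\<close>

lemma (in vector_space) independent_section_image_Un_kernel:
  assumes M: "module_hom scale scale M"
    and BW: "independent BW" "finite BW" "\<And>b. b \<in> BW \<Longrightarrow> M (s b) = b"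
    and BK: "independent BK" "finite BK" "\<And>x. x \<in> BK \<Longrightarrow> M x = 0"
  shows "independent (s ` BW \<union> BK)"
proof (rule independent_if_scalars_zero)
  have inj: "inj_on s BW" by (metis inj_onI BW(3))
  have disj: "s ` BW \<inter> BK = {}" using BW BK dependent_zero by fastforce
  show "finite (s ` BW \<union> BK)" using BW(2) BK(2) by simp
  fix f x assume sum0: "(\<Sum>x\<in>s ` BW \<union> BK. f x *s x) = 0" and x: "x \<in> s ` BW \<union> BK"
  have split: "(\<Sum>x\<in>s ` BW. f x *s x) + (\<Sum>x\<in>BK. f x *s x) = 0"
    using sum0 sum.union_disjoint[OF _ BK(2) disj] BW(2) by (metis finite_imageI)
  then have "M ((\<Sum>x\<in>s ` BW. f x *s x) + (\<Sum>x\<in>BK. f x *s x)) = 0"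
    using module_hom.zero[OF M] by simp
  then have "(\<Sum>x\<in>s ` BW. f x *s M x) = 0"
    using BK(3) unfolding module_hom.add[OF M] module_hom.sum[OF M] module_hom.scale[OF M] by simp
  then have "(\<Sum>b\<in>BW. f (s b) *s b) = 0"
    using sum.reindex[OF inj, of "\<lambda>x. f x *s M x"] BW(3) by simp
  then have c1: "\<And>b. b \<in> BW \<Longrightarrow> f (s b) = 0"
    using independentD[OF BW(1,2), of "\<lambda>b. f (s b)"] by blast
  then have "(\<Sum>x\<in>BK. f x *s x) = 0" using split by (simp add: sum.reindex[OF inj])
  then have "\<And>b. b \<in> BK \<Longrightarrow> f b = 0"
    using independentD[OF BK(1,2), of f] by blast
  then show "f x = 0" using x c1 by auto
qed

lemma (in vector_space) dim_split_by_retraction: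
  assumes fin: "finite B" and VB: "V \<subseteq> span B" and WB: "W \<subseteq> span B"
    and subV: "subspace V"
    and M: "module_hom scale scale M" and s: "module_hom scale scale s"
    and MV: "\<And>v. v \<in> V \<Longrightarrow> M v \<in> W" and sW: "\<And>w. w \<in> W \<Longrightarrow> s w \<in> V"
    and Ms: "\<And>w. w \<in> W \<Longrightarrow> M (s w) = w"
  shows "dim V = dim W + dim {v\<in>V. M v = 0}"
proof -
  let ?K = "{v\<in>V. M v = 0}"
  obtain BW where BW: "BW \<subseteq> W" "independent BW" "W \<subseteq> span BW"
    using maximal_independent_subset by blast
  obtain BK where BK: "BK \<subseteq> ?K" "independent BK" "?K \<subseteq> span BK"
    using maximal_independent_subset by blast
  have fBW: "finite BW" using independent_span_bound[OF fin BW(2)] BW(1) WB by auto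
  have fBK: "finite BK" using independent_span_bound[OF fin BK(2)] BK(1) VB by auto
  have MsBW: "\<And>b. b \<in> BW \<Longrightarrow> M (s b) = b" using Ms BW(1) by auto
  have MBK: "\<And>x. x \<in> BK \<Longrightarrow> M x = 0" using BK(1) by auto
  have "inj_on s BW" by (metis inj_onI MsBW)
  moreover have "s ` BW \<inter> BK = {}" using MsBW MBK BW(2) dependent_zero by fastforce
  ultimately have "card (s ` BW \<union> BK) = card BW + card BK"
    using card_Un_disjoint[OF _ fBK] fBW card_image by fastforce
  moreover have "s ` BW \<union> BK \<subseteq> V" using sW BW(1) BK(1) by auto
  moreover have "V \<subseteq> span (s ` BW \<union> BK)"
  proof
    fix v assume v: "v \<in> V"
    have "s (M v) \<in> span (s ` BW)"
      using MV[OF v] BW(3) module_hom.span_image[OF s] by auto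
    then have 1: "s (M v) \<in> span (s ` BW \<union> BK)" using span_mono[of "s ` BW"] by blast
    have "v - s (M v) \<in> ?K"
      using subspace_diff[OF subV v sW[OF MV[OF v]]] module_hom.diff[OF M] Ms[OF MV[OF v]] by simp
    then have 2: "v - s (M v) \<in> span (s ` BW \<union> BK)" using BK(3) span_mono[of BK] by blast
    show "v \<in> span (s ` BW \<union> BK)" using span_add[OF 1 2] by simp
  qed
  moreover have "independent (s ` BW \<union> BK)"
    using independent_section_image_Un_kernel[OF M BW(2) fBW MsBW BK(2) fBK MBK] .
  ultimately have "dim V = card BW + card BK" using basis_card_eq_dim by simp
  then show ?thesis
    using basis_card_eq_dim[OF BW(1,3,2)] basis_card_eq_dim[OF BK(1,3,2)] by simp
qed

interpretation VS: vector_space "\<lambda>(c::real) (P :: 'b \<Rightarrow> real). (\<lambda>f. c * P f)"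
  by unfold_locales (auto simp: fun_eq_iff algebra_simps)

abbreviation fun_linear :: "(('b \<Rightarrow> real) \<Rightarrow> 'b \<Rightarrow> real) \<Rightarrow> bool" where
  "fun_linear M \<equiv> module_hom (\<lambda>(c::real) P f. c * P f) (\<lambda>(c::real) P f. c * P f) M"

lemma sum_fun_apply: "(\<Sum>i\<in>A. F i) x = (\<Sum>i\<in>A. F i x)"
  by (induction A rule: infinite_finite_induct) auto

definition delta :: "'b \<Rightarrow> 'b \<Rightarrow> real" where
  "delta \<omega> = (\<lambda>f. if f = \<omega> then 1 else 0)"

definition supported_on :: "'b set \<Rightarrow> ('b \<Rightarrow> real) set" where
  "supported_on \<Omega> = {P. \<forall>f. f \<notin> \<Omega> \<longrightarrow> P f = 0}"

lemma inj_delta: "inj delta"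
  by (rule injI) (metis delta_def zero_neq_one)

lemma supported_on_subset_span:
  assumes "finite \<Omega>" shows "supported_on \<Omega> \<subseteq> VS.span (delta ` \<Omega>)"
proof
  fix P assume P: "P \<in> supported_on \<Omega>"
  have "P = (\<Sum>\<omega>\<in>\<Omega>. (\<lambda>f. P \<omega> * delta \<omega> f))"
    using P assms by (auto simp: fun_eq_iff sum_fun_apply delta_def supported_on_def if_distrib
        cong: if_cong)
  moreover have "(\<Sum>\<omega>\<in>\<Omega>. (\<lambda>f. P \<omega> * delta \<omega> f)) \<in> VS.span (delta ` \<Omega>)"
    by (intro VS.span_sum VS.span_scale VS.span_base) auto
  ultimately show "P \<in> VS.span (delta ` \<Omega>)" by simp
qed

lemma dim_supported_on:
  assumes fin: "finite \<Omega>" shows "VS.dim (supported_on \<Omega>) = card \<Omega>"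
proof -
  have "VS.independent (delta ` \<Omega>)"
  proof (rule VS.independent_if_scalars_zero)
    show "finite (delta ` \<Omega>)" using fin by simp
    fix c x assume s: "(\<Sum>x\<in>delta ` \<Omega>. (\<lambda>f. c x * x f)) = 0" and x: "x \<in> delta ` \<Omega>"
    then obtain \<omega> where \<omega>: "\<omega> \<in> \<Omega>" "x = delta \<omega>" by auto
    have "0 = (\<Sum>x\<in>delta ` \<Omega>. (\<lambda>f. c x * x f)) \<omega>" using s by simp
    also have "\<dots> = (\<Sum>\<omega>'\<in>\<Omega>. c (delta \<omega>') * delta \<omega>' \<omega>)"
      unfolding sum_fun_apply using sum.reindex[OF inj_on_subset[OF inj_delta], of \<Omega>] by simp
    also have "\<dots> = c x" using \<omega> fin by (simp add: delta_def if_distrib cong: if_cong)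
    finally show "c x = 0" by simp
  qed
  moreover have "delta ` \<Omega> \<subseteq> supported_on \<Omega>" by (auto simp: supported_on_def delta_def)
  ultimately have "VS.dim (supported_on \<Omega>) = card (delta ` \<Omega>)"
    using VS.basis_card_eq_dim[OF _ supported_on_subset_span[OF fin]] by simp
  then show ?thesis using card_image[OF inj_on_subset[OF inj_delta]] by simp
qed

lemma dim_singleton_zero: "VS.dim {0} = 0"
  using VS.dim_unique[of "{}" "{0}" 0] VS.span_zero VS.independent_empty by auto

lemma finite_idx: "finite X \<Longrightarrow> finite (idx X \<kappa>)"
  unfolding idx_def by (rule finite_PiE) auto

lemma card_idx: "finite X \<Longrightarrow> card (idx X \<kappa>) = \<kappa> ^ card X"
  unfolding idx_def by (simp add: card_PiE)

lemma idx_less: "g \<in> idx X \<kappa> \<Longrightarrow> a \<in> X \<Longrightarrow> g a < \<kappa>"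
  by (auto simp: idx_def PiE_iff)

lemma restrict_in_idx: "f \<in> idx X \<kappa> \<Longrightarrow> Y \<subseteq> X \<Longrightarrow> restrict f Y \<in> idx Y \<kappa>"
  unfolding idx_def by (auto simp: PiE_iff)

lemma tensors_eq_supported_on: "{P. is_tensor X \<kappa> P} = supported_on (idx X \<kappa>)"
  by (auto simp: is_tensor_def supported_on_def)

lemma tensors_subset_span:
  assumes "finite \<Omega>" "idx X \<kappa> \<subseteq> \<Omega>"
  shows "{P. is_tensor X \<kappa> P} \<subseteq> VS.span (delta ` \<Omega>)"
  using assms supported_on_subset_span[OF assms(1)]
  unfolding tensors_eq_supported_on supported_on_def by blast

lemma dim_tensors: "finite X \<Longrightarrow> VS.dim {P. is_tensor X \<kappa> P} = \<kappa> ^ card X"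
  by (simp add: tensors_eq_supported_on dim_supported_on finite_idx card_idx)

lemma marg_eq_0_outside: "g \<notin> idx Y \<kappa> \<Longrightarrow> Y \<subseteq> X \<Longrightarrow> marg X \<kappa> P Y g = 0"
  unfolding marg_def using restrict_in_idx by (metis (mono_tags, lifting) mem_Collect_eq sum.neutral)

lemma is_tensor_marg: "Y \<subseteq> X \<Longrightarrow> is_tensor Y \<kappa> (marg X \<kappa> P Y)"
  unfolding is_tensor_def using marg_eq_0_outside by blast

lemma marg_same: "is_tensor X \<kappa> P \<Longrightarrow> marg X \<kappa> P X = P"
proof
  fix g assume P: "is_tensor X \<kappa> P"
  show "marg X \<kappa> P X g = P g"
  proof (cases "g \<in> idx X \<kappa>")
    case True
    then have "{f \<in> idx X \<kappa>. restrict f X = g} = {g}" by (auto simp: idx_def)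
    then show ?thesis by (simp add: marg_def)
  next
    case False
    then have "{f \<in> idx X \<kappa>. restrict f X = g} = {}" by (auto simp: idx_def)
    then show ?thesis using P False unfolding marg_def is_tensor_def by (metis sum.empty)
  qed
qed

lemma marg_marg:
  assumes "finite X" "Y \<subseteq> Z" "Z \<subseteq> X"
  shows "marg Z \<kappa> (marg X \<kappa> P Z) Y = marg X \<kappa> P Y"
proof
  fix g
  let ?S = "{f \<in> idx X \<kappa>. restrict f Y = g}"
  let ?T = "{h \<in> idx Z \<kappa>. restrict h Y = g}"
  have rr: "\<And>f. restrict (restrict f Z) Y = restrict f Y" using assms(2)
    by (auto simp: restrict_def fun_eq_iff)
  have fS: "finite ?S" using finite_idx[OF assms(1)] by auto
  have fT: "finite ?T" using finite_idx[OF finite_subset[OF assms(3,1)]] by auto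
  have im: "(\<lambda>f. restrict f Z) ` ?S \<subseteq> ?T" using restrict_in_idx assms rr by auto
  have "marg Z \<kappa> (marg X \<kappa> P Z) Y g = (\<Sum>h\<in>?T. sum P {f \<in> ?S. restrict f Z = h})"
    unfolding marg_def
    by (rule sum.cong[OF refl], rule arg_cong[where f = "sum P"]) (use rr Int_absorb1[OF assms(2)] in auto)
  also have "\<dots> = sum P ?S" using sum.group[OF fS fT im] by simp
  finally show "marg Z \<kappa> (marg X \<kappa> P Z) Y g = marg X \<kappa> P Y g" unfolding marg_def .
qed

lemma marg_add: "marg X \<kappa> (P + Q) Y = marg X \<kappa> P Y + marg X \<kappa> Q Y"
  by (simp add: marg_def fun_eq_iff sum.distrib)

lemma marg_scale: "marg X \<kappa> (\<lambda>f. c * P f) Y = (\<lambda>g. c * marg X \<kappa> P Y g)"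
  by (simp add: marg_def fun_eq_iff sum_distrib_left)

lemma fun_linear_marg: "fun_linear (\<lambda>P. marg X \<kappa> P Y)"
  by (simp add: module_hom_iff VS.module_axioms marg_add marg_scale)

lemma fiber_restrict_insert:
  assumes "z \<notin> Y" "g \<in> idx Y \<kappa>"
  shows "{f \<in> idx (insert z Y) \<kappa>. restrict f Y = g} = (\<lambda>c. g(z := c)) ` {..<\<kappa>}"
proof (intro set_eqI iffI)
  fix f assume f: "f \<in> {f \<in> idx (insert z Y) \<kappa>. restrict f Y = g}"
  have "f x = (g(z := f z)) x" for x
    using f assms fun_cong[of "restrict f Y" g x]
    by (cases "x = z"; cases "x \<in> Y") (auto simp: idx_def PiE_iff extensional_def)
  then have "f = g(z := f z)" ..
  moreover have "f z < \<kappa>" using f by (auto simp: idx_def PiE_iff)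
  ultimately show "f \<in> (\<lambda>c. g(z := c)) ` {..<\<kappa>}" by blast
next
  fix f assume "f \<in> (\<lambda>c. g(z := c)) ` {..<\<kappa>}"
  then show "f \<in> {f \<in> idx (insert z Y) \<kappa>. restrict f Y = g}"
    using assms by (auto simp: idx_def PiE_iff extensional_def restrict_def fun_eq_iff)
qed

lemma marg_insert:
  assumes "z \<notin> Y" "g \<in> idx Y \<kappa>"
  shows "marg (insert z Y) \<kappa> P Y g = (\<Sum>c<\<kappa>. P (g(z := c)))"
proof -
  have "inj_on (\<lambda>c. g(z := c)) {..<\<kappa>}"
    by (auto simp: inj_on_def fun_eq_iff dest: spec[of _ z])
  then show ?thesis
    unfolding marg_def fiber_restrict_insert[OF assms] by (simp add: sum.reindex)
qed

section \<open>Invariance under swapping two indices\<close>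

definition swap_invariant :: "nat \<Rightarrow> 'a set \<Rightarrow> 'a \<Rightarrow> 'a \<Rightarrow> (('a \<Rightarrow> nat) \<Rightarrow> real) \<Rightarrow> bool" where
  "swap_invariant \<kappa> Y a b Q \<longleftrightarrow> (\<forall>g \<in> idx Y \<kappa>. Q (Fun.swap a b g) = Q g)"

lemma swap_invariant_commute: "swap_invariant \<kappa> Y a b Q \<longleftrightarrow> swap_invariant \<kappa> Y b a Q"
  by (simp add: swap_invariant_def transpose_commute)

lemma swap_in_idx: "a \<in> X \<Longrightarrow> b \<in> X \<Longrightarrow> f \<in> idx X \<kappa> \<Longrightarrow> Fun.swap a b f \<in> idx X \<kappa>"
  unfolding idx_def by (auto simp: PiE_iff extensional_def Transposition.transpose_def)

lemma marg_swap:
  assumes ab: "a \<in> X" "b \<in> X" and Y: "Y \<subseteq> X" and g: "g \<in> idx Y \<kappa>"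
    and inv: "swap_invariant \<kappa> X a b P"
  shows "marg X \<kappa> P Y g
       = marg X \<kappa> P (Transposition.transpose a b ` Y) (restrict (Fun.swap a b g) (Transposition.transpose a b ` Y))"
  unfolding marg_def
proof (rule sum.reindex_bij_witness[where i = "Fun.swap a b" and j = "Fun.swap a b"])
  let ?t = "Transposition.transpose a b"
  have ge: "g \<in> extensional Y" using g by (auto simp: idx_def PiE_iff)
  show "\<And>f. Fun.swap a b (Fun.swap a b f) = f" "\<And>f. Fun.swap a b (Fun.swap a b f) = f"
    by (simp_all add: comp_assoc)
  show "\<And>f. f \<in> {f \<in> idx X \<kappa>. restrict f Y = g} \<Longrightarrow> P (Fun.swap a b f) = P f"
    using inv by (auto simp: swap_invariant_def)
  fix f
  show "f \<in> {f \<in> idx X \<kappa>. restrict f Y = g} \<Longrightarrow>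
     Fun.swap a b f \<in> {f \<in> idx X \<kappa>. restrict f (?t ` Y) = restrict (Fun.swap a b g) (?t ` Y)}"
    using swap_in_idx[OF ab] by (force simp: restrict_def fun_eq_iff)
  assume f: "f \<in> {f \<in> idx X \<kappa>. restrict f (?t ` Y) = restrict (Fun.swap a b g) (?t ` Y)}"
  have "restrict (Fun.swap a b f) Y = g"
  proof
    fix x
    show "restrict (Fun.swap a b f) Y x = g x"
    proof (cases "x \<in> Y")
      case True
      then have "?t x \<in> ?t ` Y" by auto
      then show ?thesis using f True by (auto simp: restrict_def fun_eq_iff dest!: spec[of _ "?t x"])
    next
      case False
      then show ?thesis using ge by (auto simp: extensional_def)
    qed
  qed
  then show "Fun.swap a b f \<in> {f \<in> idx X \<kappa>. restrict f Y = g}"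
    using f swap_in_idx[OF ab] by auto
qed

lemma swap_invariant_marg:
  assumes "a \<in> Y" "b \<in> Y" "Y \<subseteq> X" "swap_invariant \<kappa> X a b P"
  shows "swap_invariant \<kappa> Y a b (marg X \<kappa> P Y)"
  unfolding swap_invariant_def
proof
  fix g assume g: "g \<in> idx Y \<kappa>"
  have "marg X \<kappa> P Y (Fun.swap a b g)
      = marg X \<kappa> P Y (restrict (Fun.swap a b (Fun.swap a b g)) Y)"
    using marg_swap[OF _ _ assms(3) swap_in_idx[OF assms(1,2) g] assms(4)] assms by auto
  also have "\<dots> = marg X \<kappa> P Y g"
    using g PiE_restrict[of g Y] by (simp add: comp_assoc idx_def)
  finally show "marg X \<kappa> P Y (Fun.swap a b g) = marg X \<kappa> P Y g" .
qed

text \<open>The transposition of y and z carries Y to a set whose last two taxa are a and y, and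
  invariance of P under it transports the symmetry of that marginal back to Y.\<close>
lemma swap_invariant_marg_transfer:
  assumes inv: "swap_invariant \<kappa> X y z P" and yz: "y \<in> X" "z \<in> X" and Y: "Y \<subseteq> X"
    and Yyz: "z \<in> Y" "y \<notin> Y" and a: "a \<in> Y" "a \<noteq> z"
    and sym': "swap_invariant \<kappa> (Transposition.transpose y z ` Y) a y (marg X \<kappa> P (Transposition.transpose y z ` Y))"
  shows "swap_invariant \<kappa> Y a z (marg X \<kappa> P Y)"
  unfolding swap_invariant_def
proof
  fix g assume g: "g \<in> idx Y \<kappa>"
  let ?Y' = "Transposition.transpose y z ` Y"
  let ?h = "restrict (Fun.swap y z g) ?Y'"
  have h: "?h \<in> idx ?Y' \<kappa>" using g by (auto simp: idx_def PiE_iff Transposition.transpose_def)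
  have "restrict (Fun.swap y z (Fun.swap a z g)) ?Y' = Fun.swap a y ?h"
    using a Yyz by (auto simp: fun_eq_iff restrict_def Transposition.transpose_def)
  then have "marg X \<kappa> P Y (Fun.swap a z g) = marg X \<kappa> P ?Y' (Fun.swap a y ?h)"
    using marg_swap[OF yz Y swap_in_idx[OF a(1) Yyz(1) g] inv] by simp
  also have "\<dots> = marg X \<kappa> P ?Y' ?h"
    using sym' h by (simp add: swap_invariant_def)
  also have "\<dots> = marg X \<kappa> P Y g"
    using marg_swap[OF yz Y g inv] by simp
  finally show "marg X \<kappa> P Y (Fun.swap a z g) = marg X \<kappa> P Y g" .
qed

section \<open>Symmetry of last pairs versus symmetry along prefixes\<close>

definition last_pair_symmetric :: "nat \<Rightarrow> 'a list \<Rightarrow> (('a \<Rightarrow> nat) \<Rightarrow> real) \<Rightarrow> bool" where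
  "last_pair_symmetric \<kappa> xs P \<longleftrightarrow>
     (\<forall>Y \<subseteq> set xs. \<forall>us a b. filter (\<lambda>x. x \<in> Y) xs = us @ [a, b] \<longrightarrow>
        swap_invariant \<kappa> Y a b (marg (set xs) \<kappa> P Y))"

definition prefix_symmetric :: "nat \<Rightarrow> 'a list \<Rightarrow> (('a \<Rightarrow> nat) \<Rightarrow> real) \<Rightarrow> bool" where
  "prefix_symmetric \<kappa> xs P \<longleftrightarrow>
     (\<forall>k us a b. take k xs = us @ [a, b] \<longrightarrow>
        swap_invariant \<kappa> (set (take k xs)) a b (marg (set xs) \<kappa> P (set (take k xs))))"

lemma filter_in_set_take:
  assumes "distinct xs" shows "filter (\<lambda>x. x \<in> set (take k xs)) xs = take k xs"
proof -
  have "set (take k xs) \<inter> set (drop k xs) = {}"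
    using assms set_take_disj_set_drop_if_distinct by fastforce
  then show ?thesis
    by (subst append_take_drop_id[symmetric, of xs k], subst filter_append)
       (auto simp: filter_id_conv filter_empty_conv)
qed

lemma last_pair_symmetric_imp_prefix_symmetric:
  "distinct xs \<Longrightarrow> last_pair_symmetric \<kappa> xs P \<Longrightarrow> prefix_symmetric \<kappa> xs P"
  unfolding last_pair_symmetric_def prefix_symmetric_def
  by (metis filter_in_set_take set_take_subset)

lemma prefix_symmetric_snoc:
  assumes dist: "distinct (ws @ [y, z])" and P: "is_tensor (set (ws @ [y, z])) \<kappa> P"
  shows "prefix_symmetric \<kappa> (ws @ [y, z]) P \<longleftrightarrow>
      prefix_symmetric \<kappa> (ws @ [y]) (marg (set (ws @ [y, z])) \<kappa> P (set (ws @ [y])))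
      \<and> swap_invariant \<kappa> (set (ws @ [y, z])) y z P"
    (is "?L \<longleftrightarrow> ?R1 \<and> ?R2")
proof -
  let ?xs = "ws @ [y, z]" and ?ys = "ws @ [y]"
  have mm: "marg (set ?ys) \<kappa> (marg (set ?xs) \<kappa> P (set ?ys)) (set (take k ?ys))
      = marg (set ?xs) \<kappa> P (set (take k ?ys))" for k
    by (rule marg_marg) (auto dest: in_set_takeD)
  have take_ys: "k \<le> length ?ys \<Longrightarrow> take k ?xs = take k ?ys" for k
    using take_append[of k ?ys "[z]"] by simp
  show ?thesis
  proof
    assume L: ?L
    have R1: ?R1 unfolding prefix_symmetric_def mm
    proof (intro allI impI)
      fix k us a b assume k: "take k ?ys = us @ [a, b]"
      have "take k ?ys = take (min k (length ?ys)) ?xs"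
        using take_ys[of "min k (length ?ys)"] by (simp add: min_def)
      then show "swap_invariant \<kappa> (set (take k ?ys)) a b (marg (set ?xs) \<kappa> P (set (take k ?ys)))"
        using L k unfolding prefix_symmetric_def by metis
    qed
    have "take (length ?xs) ?xs = ws @ [y, z]" by simp
    then have ?R2 using L marg_same[OF P] unfolding prefix_symmetric_def by (metis take_all order_refl)
    with R1 show "?R1 \<and> ?R2" ..
  next
    assume R: "?R1 \<and> ?R2"
    show ?L unfolding prefix_symmetric_def
    proof (intro allI impI)
      fix k us a b assume k: "take k ?xs = us @ [a, b]"
      show "swap_invariant \<kappa> (set (take k ?xs)) a b (marg (set ?xs) \<kappa> P (set (take k ?xs)))"
      proof (cases "k \<le> length ?ys")
        case True
        then show ?thesis using R k take_ys[OF True] unfolding prefix_symmetric_def mm by metis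
      next
        case False
        then have "take k ?xs = ?xs" by simp
        then have "a = y" "b = z" using k by auto
        then show ?thesis using R marg_same[OF P] \<open>take k ?xs = ?xs\<close> by simp
      qed
    qed
  qed
qed

lemma last_pair_symmetric_snoc:
  assumes dist: "distinct (ws @ [y, z])"
    and sym_ys: "last_pair_symmetric \<kappa> (ws @ [y]) (marg (set (ws @ [y, z])) \<kappa> P (set (ws @ [y])))"
    and inv: "swap_invariant \<kappa> (set (ws @ [y, z])) y z P"
  shows "last_pair_symmetric \<kappa> (ws @ [y, z]) P"
  unfolding last_pair_symmetric_def
proof (intro allI impI)
  let ?X = "set (ws @ [y, z])" and ?ys = "ws @ [y]"
  have yz: "y \<in> ?X" "z \<in> ?X" by auto
  have sym_ys': "swap_invariant \<kappa> Y a b (marg ?X \<kappa> P Y)"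
    if "Y \<subseteq> set ?ys" "filter (\<lambda>x. x \<in> Y) ?ys = us @ [a, b]" for Y us a b
  proof -
    have "marg (set ?ys) \<kappa> (marg ?X \<kappa> P (set ?ys)) Y = marg ?X \<kappa> P Y"
      by (rule marg_marg) (use that(1) in auto)
    then show ?thesis using sym_ys that unfolding last_pair_symmetric_def by metis
  qed
  fix Y us a b assume Y: "Y \<subseteq> ?X" and fl: "filter (\<lambda>x. x \<in> Y) (ws @ [y, z]) = us @ [a, b]"
  show "swap_invariant \<kappa> Y a b (marg ?X \<kappa> P Y)"
  proof (cases "z \<in> Y")
    case False
    then have "Y \<subseteq> set ?ys" "filter (\<lambda>x. x \<in> Y) ?ys = us @ [a, b]" using Y fl by auto
    then show ?thesis by (rule sym_ys')
  next
    case True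
    then have "filter (\<lambda>x. x \<in> Y) ?ys @ [z] = (us @ [a]) @ [b]"
      using fl by (cases "y \<in> Y") simp_all
    then have fl_ws: "filter (\<lambda>x. x \<in> Y) ?ys = us @ [a]" and b: "b = z"
      unfolding append1_eq_conv by auto
    have "a \<in> set (filter (\<lambda>x. x \<in> Y) ?ys)" unfolding fl_ws by simp
    then have a: "a \<in> Y" "a \<in> set ?ys" unfolding set_filter by blast+
    then have "a \<noteq> z" using dist by auto
    show ?thesis
    proof (cases "y \<in> Y")
      case True
      then have "a = y" using fl_ws by simp
      then show ?thesis using swap_invariant_marg[OF True \<open>z \<in> Y\<close> Y inv] b by simp
    next
      case False
      let ?Y' = "Transposition.transpose y z ` Y"
      have Y': "?Y' = insert y (Y - {z})" using \<open>z \<in> Y\<close> False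
        by (auto simp: Transposition.transpose_def image_def)
      have "filter (\<lambda>x. x \<in> ?Y') ws = filter (\<lambda>x. x \<in> Y) ws"
        using dist by (intro filter_cong) (auto simp: Y')
      then have "filter (\<lambda>x. x \<in> ?Y') ?ys = us @ [a, y]" using fl_ws False by (simp add: Y')
      moreover have "?Y' \<subseteq> set ?ys" using Y Y' by auto
      ultimately have "swap_invariant \<kappa> ?Y' a y (marg ?X \<kappa> P ?Y')" using sym_ys' by blast
      then show ?thesis
        using swap_invariant_marg_transfer[OF inv yz Y \<open>z \<in> Y\<close> False a(1) \<open>a \<noteq> z\<close>] b by simp
    qed
  qed
qed

lemma prefix_symmetric_imp_last_pair_symmetric:
  "distinct xs \<Longrightarrow> is_tensor (set xs) \<kappa> P \<Longrightarrow> prefix_symmetric \<kappa> xs P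
    \<Longrightarrow> last_pair_symmetric \<kappa> xs P"
proof (induction xs arbitrary: P rule: rev_induct)
  case Nil
  then show ?case by (simp add: last_pair_symmetric_def)
next
  case (snoc z ys)
  show ?case
  proof (cases ys rule: rev_cases)
    case Nil
    then show ?thesis by (auto simp: last_pair_symmetric_def Cons_eq_append_conv)
  next
    case (snoc ws y)
    let ?M = "marg (set (ws @ [y, z])) \<kappa> P (set (ws @ [y]))"
    have dist: "distinct (ws @ [y, z])" and P: "is_tensor (set (ws @ [y, z])) \<kappa> P"
      using snoc.prems snoc by auto
    have "prefix_symmetric \<kappa> (ws @ [y]) ?M" "swap_invariant \<kappa> (set (ws @ [y, z])) y z P"
      using prefix_symmetric_snoc[OF dist P] snoc.prems(3) snoc by auto
    moreover have "is_tensor (set (ws @ [y])) \<kappa> ?M" by (rule is_tensor_marg) auto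
    ultimately show ?thesis
      using last_pair_symmetric_snoc[OF dist] snoc.IH dist snoc by simp
  qed
qed

lemma prefix_symmetric_iff_last_pair_symmetric:
  "distinct xs \<Longrightarrow> is_tensor (set xs) \<kappa> P \<Longrightarrow> prefix_symmetric \<kappa> xs P \<longleftrightarrow> last_pair_symmetric \<kappa> xs P"
  using prefix_symmetric_imp_last_pair_symmetric last_pair_symmetric_imp_prefix_symmetric by blast

section \<open>Dimension of the prefix-symmetric tensors\<close>

lemma swap_in_idx_iff: "a \<in> X \<Longrightarrow> b \<in> X \<Longrightarrow> Fun.swap a b f \<in> idx X \<kappa> \<longleftrightarrow> f \<in> idx X \<kappa>"
  using swap_in_idx[of a X b "Fun.swap a b f" \<kappa>] swap_in_idx[of a X b f \<kappa>] by (auto simp: comp_assoc)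

lemma swap_eq_self: "g y = g z \<Longrightarrow> Fun.swap y z g = g"
  by (auto simp: fun_eq_iff Transposition.transpose_def)

definition symmetric_tensors :: "nat \<Rightarrow> 'a set \<Rightarrow> 'a \<Rightarrow> 'a \<Rightarrow> (('a \<Rightarrow> nat) \<Rightarrow> real) set" where
  "symmetric_tensors \<kappa> X y z = {P. is_tensor X \<kappa> P \<and> swap_invariant \<kappa> X y z P}"

lemma subspace_symmetric_tensors: "VS.subspace (symmetric_tensors \<kappa> X y z)"
  by (auto simp: VS.subspace_def symmetric_tensors_def is_tensor_def swap_invariant_def)

text \<open>A symmetric tensor is determined by its entries with f y \<le> f z, and these can be
  prescribed freely.\<close>
lemma dim_symmetric_tensors:
  assumes yz: "y \<in> X" "z \<in> X" and X: "finite X"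
  shows "VS.dim (symmetric_tensors \<kappa> X y z) = card {f \<in> idx X \<kappa>. f y \<le> f z}"
proof -
  define \<Omega> where "\<Omega> = {f \<in> idx X \<kappa>. f y \<le> f z}"
  define M where "M = (\<lambda>P (f :: 'a \<Rightarrow> nat). if f \<in> \<Omega> then P f else (0::real))"
  define s where "s = (\<lambda>Q (f :: 'a \<Rightarrow> nat). if f y \<le> f z then Q f else (Q (Fun.swap y z f) :: real))"
  let ?S = "symmetric_tensors \<kappa> X y z"
  have span: "{P. is_tensor X \<kappa> P} \<subseteq> VS.span (delta ` idx X \<kappa>)"
    using tensors_subset_span[OF finite_idx[OF X]] by simp
  have s_sym: "s w \<in> ?S" if w: "w \<in> supported_on \<Omega>" for w
  proof -
    have "s w f = 0" if "f \<notin> idx X \<kappa>" for f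
      using that w swap_in_idx_iff[OF yz] by (auto simp: s_def supported_on_def \<Omega>_def)
    moreover have "s w (Fun.swap y z g) = s w g" for g
      by (cases "g y = g z") (auto simp: s_def swap_eq_self comp_assoc)
    ultimately show ?thesis by (simp add: symmetric_tensors_def is_tensor_def swap_invariant_def)
  qed
  have "VS.dim ?S = VS.dim (supported_on \<Omega>) + VS.dim {P \<in> ?S. M P = 0}"
  proof (rule VS.dim_split_by_retraction)
    show "finite (delta ` idx X \<kappa>)" using finite_idx[OF X] by simp
    show "?S \<subseteq> VS.span (delta ` idx X \<kappa>)" using span by (auto simp: symmetric_tensors_def)
    show "supported_on \<Omega> \<subseteq> VS.span (delta ` idx X \<kappa>)"
      using span by (auto simp: supported_on_def is_tensor_def \<Omega>_def)
    show "fun_linear M" "fun_linear s"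
      by (simp_all add: M_def s_def module_hom_iff VS.module_axioms fun_eq_iff)
    show "VS.subspace ?S" by (rule subspace_symmetric_tensors)
    show "\<And>P. P \<in> ?S \<Longrightarrow> M P \<in> supported_on \<Omega>" by (auto simp: M_def supported_on_def)
    show "\<And>w. w \<in> supported_on \<Omega> \<Longrightarrow> s w \<in> ?S" by (rule s_sym)
    show "\<And>w. w \<in> supported_on \<Omega> \<Longrightarrow> M (s w) = w"
      by (auto simp: M_def s_def supported_on_def \<Omega>_def fun_eq_iff)
  qed
  also have "{P \<in> ?S. M P = 0} = {0}"
  proof (intro set_eqI iffI)
    fix P assume P: "P \<in> {P \<in> ?S. M P = 0}"
    have "P f = 0" for f
    proof (cases "f \<in> idx X \<kappa>")
      case False then show ?thesis using P by (auto simp: symmetric_tensors_def is_tensor_def)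
    next
      case True
      have "P f = P (Fun.swap y z f)" using P True by (simp add: symmetric_tensors_def swap_invariant_def)
      moreover have "M P f = 0" "M P (Fun.swap y z f) = 0" using P by auto
      ultimately show ?thesis
        using True swap_in_idx[OF yz True] by (auto simp: M_def \<Omega>_def split: if_splits)
    qed
    then show "P \<in> {0}" by (auto simp: fun_eq_iff)
  qed (auto simp: M_def symmetric_tensors_def is_tensor_def swap_invariant_def)
  finally show ?thesis by (simp add: dim_supported_on dim_singleton_zero \<Omega>_def finite_idx X)
qed

lemma card_idx_diagonal:
  assumes yz: "y \<in> X" "z \<in> X" "y \<noteq> z" and X: "finite X"
  shows "card {f \<in> idx X \<kappa>. f y = f z} = \<kappa> ^ (card X - 1)"
proof -
  let ?Y = "X - {z}" and ?ext = "\<lambda>g. g(z := g y)"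
  have "inj_on ?ext (idx ?Y \<kappa>)"
  proof (rule inj_onI)
    fix g h assume gh: "g \<in> idx ?Y \<kappa>" "h \<in> idx ?Y \<kappa>" and eq: "?ext g = ?ext h"
    show "g = h"
    proof
      fix x show "g x = h x"
        using fun_cong[OF eq, of x] gh by (cases "x = z") (auto simp: idx_def PiE_iff extensional_def)
    qed
  qed
  moreover have "{f \<in> idx X \<kappa>. f y = f z} = ?ext ` idx ?Y \<kappa>"
  proof
    show "{f \<in> idx X \<kappa>. f y = f z} \<subseteq> ?ext ` idx ?Y \<kappa>"
    proof
      fix f assume f: "f \<in> {f \<in> idx X \<kappa>. f y = f z}"
      have "f x = ?ext (restrict f ?Y) x" for x
        using f yz by (cases "x = z"; cases "x \<in> X") (auto simp: idx_def PiE_iff extensional_def)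
      then have "f = ?ext (restrict f ?Y)" ..
      moreover have "restrict f ?Y \<in> idx ?Y \<kappa>" using f restrict_in_idx by blast
      ultimately show "f \<in> ?ext ` idx ?Y \<kappa>" by blast
    qed
    show "?ext ` idx ?Y \<kappa> \<subseteq> {f \<in> idx X \<kappa>. f y = f z}"
    proof
      fix f assume "f \<in> ?ext ` idx ?Y \<kappa>"
      then obtain g where g: "g \<in> idx ?Y \<kappa>" "f = ?ext g" by blast
      have "g y < \<kappa>" using idx_less[OF g(1)] yz by simp
      then show "f \<in> {f \<in> idx X \<kappa>. f y = f z}"
        using g yz by (auto simp: idx_def PiE_iff extensional_def)
    qed
  qed
  ultimately have "card {f \<in> idx X \<kappa>. f y = f z} = card (idx ?Y \<kappa>)" by (simp add: card_image)
  then show ?thesis using card_idx[of ?Y] X yz by simp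
qed

lemma card_idx_ordered:
  assumes yz: "y \<in> X" "z \<in> X" "y \<noteq> z" and X: "finite X"
  shows "2 * card {f \<in> idx X \<kappa>. f y \<le> f z} = \<kappa> ^ card X + \<kappa> ^ (card X - 1)"
proof -
  define A where "A = {f \<in> idx X \<kappa>. f y \<le> f z}"
  define B where "B = {f \<in> idx X \<kappa>. f z \<le> f y}"
  have "bij_betw (Fun.swap y z) A B"
    by (rule bij_betw_byWitness[where f' = "Fun.swap y z"])
       (auto simp: A_def B_def comp_assoc swap_in_idx[OF yz(1,2)])
  then have "card A = card B" by (rule bij_betw_same_card)
  moreover have "card A + card B = card (A \<union> B) + card (A \<inter> B)"
    using finite_idx[OF X] by (intro card_Un_Int) (auto simp: A_def B_def)
  moreover have "A \<union> B = idx X \<kappa>" "A \<inter> B = {f \<in> idx X \<kappa>. f y = f z}"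
    by (auto simp: A_def B_def)
  ultimately show ?thesis
    using card_idx[OF X] card_idx_diagonal[OF yz X] by (simp add: A_def)
qed

definition diagonal_extension ::
    "nat \<Rightarrow> 'a set \<Rightarrow> 'a \<Rightarrow> 'a \<Rightarrow> (('a \<Rightarrow> nat) \<Rightarrow> real) \<Rightarrow> ('a \<Rightarrow> nat) \<Rightarrow> real" where
  "diagonal_extension \<kappa> X y z Q f =
     (if f \<in> idx X \<kappa> \<and> f z = f y then Q (restrict f (X - {z})) else 0)"

lemma fun_linear_diagonal_extension: "fun_linear (diagonal_extension \<kappa> X y z)"
  by (simp add: diagonal_extension_def module_hom_iff VS.module_axioms fun_eq_iff)

lemma diagonal_extension_symmetric:
  "diagonal_extension \<kappa> X y z Q \<in> symmetric_tensors \<kappa> X y z"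
proof -
  have "diagonal_extension \<kappa> X y z Q (Fun.swap y z g) = diagonal_extension \<kappa> X y z Q g" for g
    by (cases "g y = g z") (auto simp: diagonal_extension_def swap_eq_self)
  then show ?thesis
    by (simp add: symmetric_tensors_def is_tensor_def swap_invariant_def diagonal_extension_def)
qed

lemma marg_diagonal_extension:
  assumes yz: "y \<in> X" "z \<in> X" "y \<noteq> z" and Q: "is_tensor (X - {z}) \<kappa> Q"
  shows "marg X \<kappa> (diagonal_extension \<kappa> X y z Q) (X - {z}) = Q"
proof
  fix g
  let ?Y = "X - {z}"
  have X: "X = insert z ?Y" using yz by auto
  show "marg X \<kappa> (diagonal_extension \<kappa> X y z Q) ?Y g = Q g"
  proof (cases "g \<in> idx ?Y \<kappa>")
    case True
    have "marg X \<kappa> (diagonal_extension \<kappa> X y z Q) ?Y g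
        = (\<Sum>c<\<kappa>. diagonal_extension \<kappa> X y z Q (g(z := c)))"
      using marg_insert[OF _ True] X by (metis Diff_iff insertI1)
    also have "\<dots> = (\<Sum>c<\<kappa>. if c = g y then Q g else 0)"
    proof (rule sum.cong[OF refl])
      fix c assume "c \<in> {..<\<kappa>}"
      moreover have "restrict (g(z := c)) ?Y = g"
        using True by (auto simp: idx_def PiE_iff extensional_def fun_eq_iff)
      ultimately show "diagonal_extension \<kappa> X y z Q (g(z := c)) = (if c = g y then Q g else 0)"
        using True yz by (auto simp: diagonal_extension_def idx_def PiE_iff extensional_def)
    qed
    also have "\<dots> = Q g" using idx_less[OF True] yz by simp
    finally show ?thesis .
  next
    case False
    then show ?thesis using Q marg_eq_0_outside[OF False] by (auto simp: is_tensor_def)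
  qed
qed

definition prefix_model :: "nat \<Rightarrow> 'a list \<Rightarrow> (('a \<Rightarrow> nat) \<Rightarrow> real) set" where
  "prefix_model \<kappa> xs = {P. is_tensor (set xs) \<kappa> P \<and> prefix_symmetric \<kappa> xs P}"

lemma marg_zero: "marg X \<kappa> 0 Y = 0"
  by (simp add: marg_def fun_eq_iff)

lemma subspace_prefix_model: "VS.subspace (prefix_model \<kappa> xs)"
  by (auto simp: VS.subspace_def prefix_model_def prefix_symmetric_def swap_invariant_def
      is_tensor_def marg_zero marg_add marg_scale)

lemma dim_split_by_marg:
  assumes yz: "y \<in> X" "z \<in> X" "y \<noteq> z" and X: "finite X"
    and V: "VS.subspace V" "V \<subseteq> {P. is_tensor X \<kappa> P}"
    and W: "W \<subseteq> {P. is_tensor (X - {z}) \<kappa> P}"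
    and VW: "\<And>P. P \<in> V \<Longrightarrow> marg X \<kappa> P (X - {z}) \<in> W"
    and WV: "\<And>Q. Q \<in> W \<Longrightarrow> diagonal_extension \<kappa> X y z Q \<in> V"
  shows "VS.dim V = VS.dim W + VS.dim {P \<in> V. marg X \<kappa> P (X - {z}) = 0}"
proof (rule VS.dim_split_by_retraction[OF _ _ _ V(1) fun_linear_marg fun_linear_diagonal_extension VW WV])
  let ?\<Omega> = "idx X \<kappa> \<union> idx (X - {z}) \<kappa>"
  show "finite (delta ` ?\<Omega>)" using X by (simp add: finite_idx)
  have "{P. is_tensor X \<kappa> P} \<subseteq> VS.span (delta ` ?\<Omega>)"
    "{P. is_tensor (X - {z}) \<kappa> P} \<subseteq> VS.span (delta ` ?\<Omega>)"
    using tensors_subset_span[OF _ Un_upper1] tensors_subset_span[OF _ Un_upper2] X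
    by (metis finite_Diff finite_UnI finite_idx)+
  then show "V \<subseteq> VS.span (delta ` ?\<Omega>)" "W \<subseteq> VS.span (delta ` ?\<Omega>)"
    using V(2) W by blast+
  show "\<And>Q. Q \<in> W \<Longrightarrow> marg X \<kappa> (diagonal_extension \<kappa> X y z Q) (X - {z}) = Q"
    using marg_diagonal_extension[OF yz] W by blast
qed

lemma dim_prefix_model_snoc:
  assumes dist: "distinct (ws @ [y, z])"
  shows "2 * VS.dim (prefix_model \<kappa> (ws @ [y, z])) + \<kappa> ^ (length ws + 1)
       = 2 * VS.dim (prefix_model \<kappa> (ws @ [y])) + \<kappa> ^ (length ws + 2)"
proof -
  define X where "X = set (ws @ [y, z])"
  have yz: "y \<in> X" "z \<in> X" "y \<noteq> z" using dist by (auto simp: X_def)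
  have Y: "set (ws @ [y]) = X - {z}" using dist by (auto simp: X_def)
  have X: "finite X" by (simp add: X_def)
  let ?M = "\<lambda>P. marg X \<kappa> P (X - {z})"
  let ?K = "{P \<in> symmetric_tensors \<kappa> X y z. ?M P = 0}"
  have PM: "P \<in> prefix_model \<kappa> (ws @ [y, z])
      \<longleftrightarrow> P \<in> symmetric_tensors \<kappa> X y z \<and> ?M P \<in> prefix_model \<kappa> (ws @ [y])" for P
  proof -
    have "is_tensor (X - {z}) \<kappa> (?M P)" by (rule is_tensor_marg) blast
    then show ?thesis
      using prefix_symmetric_snoc[OF dist, of \<kappa> P]
      unfolding prefix_model_def symmetric_tensors_def X_def[symmetric] Y by blast
  qed
  have PM_ys: "prefix_model \<kappa> (ws @ [y]) \<subseteq> {P. is_tensor (X - {z}) \<kappa> P}"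
    unfolding prefix_model_def Y by blast
  have "VS.dim (prefix_model \<kappa> (ws @ [y, z]))
      = VS.dim (prefix_model \<kappa> (ws @ [y])) + VS.dim {P \<in> prefix_model \<kappa> (ws @ [y, z]). ?M P = 0}"
  proof (rule dim_split_by_marg[OF yz X subspace_prefix_model _ PM_ys])
    show "prefix_model \<kappa> (ws @ [y, z]) \<subseteq> {P. is_tensor X \<kappa> P}"
      using PM by (auto simp: symmetric_tensors_def)
    show "\<And>P. P \<in> prefix_model \<kappa> (ws @ [y, z]) \<Longrightarrow> ?M P \<in> prefix_model \<kappa> (ws @ [y])"
      using PM by blast
  next
    fix Q assume Q: "Q \<in> prefix_model \<kappa> (ws @ [y])"
    then have "?M (diagonal_extension \<kappa> X y z Q) = Q"
      using PM_ys marg_diagonal_extension[OF yz] by blast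
    then show "diagonal_extension \<kappa> X y z Q \<in> prefix_model \<kappa> (ws @ [y, z])"
      using PM Q diagonal_extension_symmetric by simp
  qed
  also have "{P \<in> prefix_model \<kappa> (ws @ [y, z]). ?M P = 0} = ?K"
    using PM subspace_prefix_model[THEN VS.subspace_0] by auto
  finally have dim_PM: "VS.dim (prefix_model \<kappa> (ws @ [y, z]))
      = VS.dim (prefix_model \<kappa> (ws @ [y])) + VS.dim ?K" .
  have "VS.dim (symmetric_tensors \<kappa> X y z) = VS.dim {P. is_tensor (X - {z}) \<kappa> P} + VS.dim ?K"
  proof (rule dim_split_by_marg[OF yz X subspace_symmetric_tensors])
    show "symmetric_tensors \<kappa> X y z \<subseteq> {P. is_tensor X \<kappa> P}"
      by (auto simp: symmetric_tensors_def)
    show "\<And>P. ?M P \<in> {P. is_tensor (X - {z}) \<kappa> P}" by (simp add: is_tensor_marg)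
    show "\<And>Q. diagonal_extension \<kappa> X y z Q \<in> symmetric_tensors \<kappa> X y z"
      by (rule diagonal_extension_symmetric)
  qed simp
  moreover have "VS.dim {P. is_tensor (X - {z}) \<kappa> P} = \<kappa> ^ (length ws + 1)"
    using dim_tensors[of "set (ws @ [y])"] dist by (simp add: Y[symmetric] distinct_card)
  moreover have "2 * VS.dim (symmetric_tensors \<kappa> X y z) = \<kappa> ^ (length ws + 2) + \<kappa> ^ (length ws + 1)"
    using dim_symmetric_tensors[OF yz(1,2) X] card_idx_ordered[OF yz X] dist
    by (simp add: X_def distinct_card)
  ultimately show ?thesis using dim_PM by linarith
qed

lemma prefix_model_singleton: "prefix_model \<kappa> [z] = {P. is_tensor {z} \<kappa> P}"
  by (auto simp: prefix_model_def prefix_symmetric_def take_Cons' Cons_eq_append_conv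
      split: if_splits)

lemma dim_prefix_model:
  "distinct xs \<Longrightarrow> xs \<noteq> [] \<Longrightarrow> 2 * VS.dim (prefix_model \<kappa> xs) = \<kappa> ^ length xs + \<kappa>"
proof (induction xs rule: rev_induct)
  case Nil
  then show ?case by simp
next
  case (snoc z ys)
  show ?case
  proof (cases ys rule: rev_cases)
    case Nil
    then show ?thesis by (simp add: prefix_model_singleton dim_tensors)
  next
    case (snoc ws y)
    then show ?thesis
      using snoc.IH snoc.prems dim_prefix_model_snoc[of ws y z \<kappa>] by simp
  qed
qed

section \<open>Affine dimension of the normalized tensors\<close>

lemma affine_dimension_sum_one_slice:
  fixes V :: "(('a \<Rightarrow> nat) \<Rightarrow> real) set"
  assumes I: "finite I" and V: "VS.subspace V" "V \<subseteq> supported_on I"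
    and U: "U \<in> V" "(\<Sum>f\<in>I. U f) = 1"
  shows "affine_dimension {P \<in> V. (\<Sum>f\<in>I. P f) = 1} + 1 = VS.dim V"
proof -
  let ?S = "{P \<in> V. (\<Sum>f\<in>I. P f) = 1}"
  define M where "M = (\<lambda>P (f :: 'a \<Rightarrow> nat). (\<Sum>g\<in>I. P g) * U f)"
  define W where "W = range (\<lambda>c (f :: 'a \<Rightarrow> nat). c * U f)"
  have U0: "U \<noteq> 0" using U(2) by auto
  have span: "V \<subseteq> VS.span (delta ` I)" using V(2) supported_on_subset_span[OF I] by blast
  have "VS.dim V = VS.dim W + VS.dim {P \<in> V. M P = 0}"
  proof (rule VS.dim_split_by_retraction[OF _ span _ V(1)])
    show "finite (delta ` I)" using I by simp
    show "W \<subseteq> VS.span (delta ` I)" using span VS.subspace_scale[OF V(1) U(1)] by (auto simp: W_def)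
    show "fun_linear M"
      by (simp add: M_def module_hom_iff VS.module_axioms fun_eq_iff sum.distrib
          sum_distrib_left algebra_simps)
    show "fun_linear id" by (simp add: module_hom_iff VS.module_axioms)
    show "\<And>P. P \<in> V \<Longrightarrow> M P \<in> W" by (auto simp: M_def W_def)
    show "\<And>w. w \<in> W \<Longrightarrow> id w \<in> V" using VS.subspace_scale[OF V(1) U(1)] by (auto simp: W_def)
    show "\<And>w. w \<in> W \<Longrightarrow> M (id w) = w"
      by (auto simp: W_def M_def sum_distrib_left[symmetric] U(2))
  qed
  moreover have "VS.dim W = 1"
  proof (rule VS.dim_unique[of "{U}"])
    show "{U} \<subseteq> W" unfolding W_def by (auto intro: range_eqI[of _ _ 1])
    show "W \<subseteq> VS.span {U}" unfolding W_def by (auto intro: VS.span_scale VS.span_base)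
    show "VS.independent {U}" using U0 by simp
  qed simp
  moreover have "{P \<in> V. M P = 0} = {P - Q | P Q. P \<in> ?S \<and> Q \<in> ?S}"
  proof (intro set_eqI iffI)
    fix P assume P: "P \<in> {P \<in> V. M P = 0}"
    then have "(\<Sum>f\<in>I. P f) = 0" using U0 by (auto simp: M_def fun_eq_iff)
    then have "P + U \<in> ?S" "U \<in> ?S"
      using P U VS.subspace_add[OF V(1)] by (auto simp: sum.distrib)
    moreover have "P = (P + U) - U" by simp
    ultimately show "P \<in> {P - Q | P Q. P \<in> ?S \<and> Q \<in> ?S}" by blast
  next
    fix P assume "P \<in> {P - Q | P Q. P \<in> ?S \<and> Q \<in> ?S}"
    then obtain P' Q where P: "P = P' - Q" "P' \<in> ?S" "Q \<in> ?S" by blast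
    then show "P \<in> {P \<in> V. M P = 0}"
      unfolding P(1) using VS.subspace_diff[OF V(1)] by (simp add: M_def fun_eq_iff sum_subtractf)
  qed
  ultimately show ?thesis by (simp add: affine_dimension_def)
qed

lemma uniform_tensor_in_prefix_model:
  "(\<lambda>f. if f \<in> idx (set xs) \<kappa> then c else 0) \<in> prefix_model \<kappa> xs"
  unfolding prefix_model_def prefix_symmetric_def
proof (intro CollectI conjI allI impI)
  let ?U = "\<lambda>f. if f \<in> idx (set xs) \<kappa> then c else 0"
  show "is_tensor (set xs) \<kappa> ?U" by (simp add: is_tensor_def)
  fix k us a b assume k: "take k xs = us @ [a, b]"
  have ab: "a \<in> set (take k xs)" "b \<in> set (take k xs)" using k by auto
  then have "a \<in> set xs" "b \<in> set xs" by (auto dest: in_set_takeD)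
  then have "swap_invariant \<kappa> (set xs) a b ?U"
    unfolding swap_invariant_def using swap_in_idx by fastforce
  then show "swap_invariant \<kappa> (set (take k xs)) a b (marg (set xs) \<kappa> ?U (set (take k xs)))"
    using swap_invariant_marg[OF ab set_take_subset] by blast
qed

lemma affine_dimension_normalized_prefix_model:
  assumes "\<kappa> \<ge> 1"
  shows "affine_dimension {P \<in> prefix_model \<kappa> xs. (\<Sum>f\<in>idx (set xs) \<kappa>. P f) = 1} + 1
       = VS.dim (prefix_model \<kappa> xs)"
proof (rule affine_dimension_sum_one_slice)
  let ?N = "card (idx (set xs) \<kappa>)"
  have "?N > 0" using assms by (simp add: card_idx)
  then show "(\<Sum>f\<in>idx (set xs) \<kappa>. (if f \<in> idx (set xs) \<kappa> then 1 / ?N else 0)) = 1" by simp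
  show "(\<lambda>f. if f \<in> idx (set xs) \<kappa> then 1 / ?N else 0) \<in> prefix_model \<kappa> xs"
    by (rule uniform_tensor_in_prefix_model)
  show "prefix_model \<kappa> xs \<subseteq> supported_on (idx (set xs) \<kappa>)"
    by (auto simp: prefix_model_def supported_on_def is_tensor_def)
qed (simp_all add: finite_idx subspace_prefix_model)

section \<open>Caterpillars and their induced subtrees\<close>

text \<open>The leaves of a caterpillar listed from the root downwards, so that its cherry comes last.\<close>
fun spine_order :: "'a rtree \<Rightarrow> 'a list" where
  "spine_order (Leaf x) = [x]"
| "spine_order (Node (Leaf x) r) = x # spine_order r"
| "spine_order (Node l (Leaf x)) = x # spine_order l"
| "spine_order (Node l r) = spine_order l @ spine_order r"

definition last_pair :: "'a list \<Rightarrow> 'a set set" where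
  "last_pair L = {{a, b} | us a b. L = us @ [a, b]}"

definition eq_upto_last_swap :: "'a list \<Rightarrow> 'a list \<Rightarrow> bool" where
  "eq_upto_last_swap L L' \<longleftrightarrow> L = L' \<or> (\<exists>us a b. L = us @ [a, b] \<and> L' = us @ [b, a])"

lemma last_pair_snoc2 [simp]: "last_pair (us @ [a, b]) = {{a, b}}"
proof -
  have "us @ [a, b] = vs @ [c, d] \<longleftrightarrow> us = vs \<and> a = c \<and> b = d" for vs c d
    using append1_eq_conv[of "us @ [a]" b "vs @ [c]" d] by auto
  then show ?thesis by (auto simp: last_pair_def)
qed

lemma last_pair_Nil [simp]: "last_pair [] = {}"
  by (simp add: last_pair_def)

lemma last_pair_singleton [simp]: "last_pair [x] = {}"
  by (auto simp: last_pair_def append_eq_Cons_conv)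

lemma snoc2_exhaust:
  assumes "2 \<le> length L" obtains us a b where "L = us @ [a, b]"
proof -
  obtain b a vs where "rev L = b # a # vs"
    using assms by (cases "rev L"; cases "tl (rev L)") auto
  then have "L = rev vs @ [a, b]" by (simp add: rev_swap)
  then show ?thesis by (rule that)
qed

lemma last_pair_Cons: "2 \<le> length L \<Longrightarrow> last_pair (x # L) = last_pair L"
  by (erule snoc2_exhaust) (metis append_Cons last_pair_snoc2)

lemma ball_last_pair_iff:
  assumes "\<And>a b. R a b \<longleftrightarrow> R b a"
  shows "(\<forall>C \<in> last_pair L. \<forall>a b. C = {a, b} \<longrightarrow> R a b) \<longleftrightarrow> (\<forall>us a b. L = us @ [a, b] \<longrightarrow> R a b)"
  using assms by (auto simp: last_pair_def doubleton_eq_iff)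

lemma eq_upto_last_swap_refl [simp]: "eq_upto_last_swap L L"
  by (simp add: eq_upto_last_swap_def)

lemma eq_upto_last_swap_Cons: "eq_upto_last_swap L L' \<Longrightarrow> eq_upto_last_swap (x # L) (x # L')"
  unfolding eq_upto_last_swap_def by (metis append_Cons)

lemma eq_upto_last_swap_trans:
  "eq_upto_last_swap L1 L2 \<Longrightarrow> eq_upto_last_swap L2 L3 \<Longrightarrow> eq_upto_last_swap L1 L3"
  unfolding eq_upto_last_swap_def by auto

lemma last_pair_eq_upto_last_swap: "eq_upto_last_swap L L' \<Longrightarrow> last_pair L = last_pair L'"
  unfolding eq_upto_last_swap_def by (auto simp: insert_commute)

lemma mset_spine_order: "caterpillar T \<Longrightarrow> mset (spine_order T) = mset (leaves_list T)"
  by (induction T rule: spine_order.induct) auto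

lemma length_leaves_list_Node: "2 \<le> length (leaves_list (Node l r))"
proof -
  have "0 < length (leaves_list T)" for T :: "'a rtree" by (induction T) auto
  from this[of l] this[of r] show ?thesis by (simp del: length_greater_0_conv)
qed

lemma induced_leaves_list:
  "(case induced T Y of
      None \<Rightarrow> filter (\<lambda>x. x \<in> Y) (leaves_list T) = []
    | Some T' \<Rightarrow> leaves_list T' = filter (\<lambda>x. x \<in> Y) (leaves_list T))"
  by (induction T) (auto split: option.splits)

lemma filter_spine_order_eq_Nil:
  assumes "caterpillar T" "induced T Y = None"
  shows "filter (\<lambda>x. x \<in> Y) (spine_order T) = []"
proof -
  have "filter (\<lambda>x. x \<in> Y) (leaves_list T) = []"
    using induced_leaves_list[where T = T and Y = Y] assms(2) by simp
  then show ?thesis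
    using mset_spine_order[OF assms(1)] by (metis filter_empty_conv mset_eq_setD)
qed

lemma spine_order_Node_Leaf: "eq_upto_last_swap (spine_order (Node l (Leaf x))) (x # spine_order l)"
  by (cases l) (auto simp: eq_upto_last_swap_def)

lemma induced_caterpillar:
  "caterpillar T \<Longrightarrow> induced T Y = Some T'
    \<Longrightarrow> caterpillar T' \<and> eq_upto_last_swap (spine_order T') (filter (\<lambda>x. x \<in> Y) (spine_order T))"
proof (induction T arbitrary: T' rule: spine_order.induct)
  case 1
  then show ?case by (auto split: if_splits)
next
  case (2 x r)
  have r: "caterpillar r" using "2.prems"(1) by simp
  show ?case
  proof (cases "induced r Y")
    case None
    then show ?thesis
      using "2.prems"(2) filter_spine_order_eq_Nil[OF r None] by (auto split: if_splits)
  next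
    case (Some r')
    then show ?thesis
      using "2.prems"(2) "2.IH"[OF r Some] by (auto split: if_splits intro: eq_upto_last_swap_Cons)
  qed
next
  case (3 a b x)
  let ?l = "Node a b"
  have l: "caterpillar ?l" using "3.prems"(1) by simp
  show ?case
  proof (cases "induced ?l Y")
    case None
    then have "T' = Leaf x" "x \<in> Y"
      using "3.prems"(2) unfolding induced.simps(2)[of ?l] by (auto split: if_splits)
    then show ?thesis using filter_spine_order_eq_Nil[OF l None] by simp
  next
    case (Some l')
    note IH = "3.IH"[OF l Some]
    have T': "T' = (if x \<in> Y then Node l' (Leaf x) else l')"
      using "3.prems"(2) unfolding induced.simps(2)[of ?l] Some by (auto split: if_splits)
    show ?thesis
    proof (cases "x \<in> Y")
      case True
      have "eq_upto_last_swap (spine_order (Node l' (Leaf x))) (x # spine_order l')"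
        by (rule spine_order_Node_Leaf)
      moreover have "eq_upto_last_swap (x # spine_order l')
          (filter (\<lambda>x. x \<in> Y) (spine_order (Node ?l (Leaf x))))"
        using eq_upto_last_swap_Cons[OF conjunct2[OF IH]] True by simp
      ultimately have "eq_upto_last_swap (spine_order (Node l' (Leaf x)))
          (filter (\<lambda>x. x \<in> Y) (spine_order (Node ?l (Leaf x))))"
        by (rule eq_upto_last_swap_trans)
      moreover have "T' = Node l' (Leaf x)" using T' True by simp
      ultimately show ?thesis using IH by simp
    next
      case False
      then show ?thesis using IH T' by simp
    qed
  qed
next
  case 4
  from "4.prems"(1) show ?case by simp
qed

lemma two_clades_Leaf [simp]: "two_clades (Leaf x) = {}"
  by (simp add: two_clades_def leaves_def)

lemma two_clades_Node:
  "two_clades (Node l r) =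
     (if card (leaves (Node l r)) = 2 then {leaves (Node l r)} else {}) \<union> two_clades l \<union> two_clades r"
  unfolding two_clades_def by auto

lemma valid_tree_NodeD: "valid_tree (Node l r) \<Longrightarrow> valid_tree l \<and> valid_tree r"
  by (simp add: valid_tree_def)

lemma card_leaves: "valid_tree T \<Longrightarrow> card (leaves T) = length (leaves_list T)"
  by (simp add: valid_tree_def leaves_def distinct_card)

lemma two_clades_Node_big:
  assumes "valid_tree (Node l r)" "3 \<le> length (leaves_list (Node l r))"
  shows "two_clades (Node l r) = two_clades l \<union> two_clades r"
  using card_leaves[OF assms(1)] assms(2) by (simp add: two_clades_Node)

lemma length_spine_order_Node:
  assumes "caterpillar (Node l r)" shows "2 \<le> length (spine_order (Node l r))"
  using mset_eq_length[OF mset_spine_order[OF assms]] length_leaves_list_Node[of l r] by simp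

lemma two_clades_caterpillar:
  "caterpillar T \<Longrightarrow> valid_tree T \<Longrightarrow> two_clades T = last_pair (spine_order T)"
proof (induction T rule: spine_order.induct)
  case 1
  then show ?case by simp
next
  case (2 x r)
  have r: "caterpillar r" "valid_tree r" using "2.prems" valid_tree_NodeD by auto
  show ?case
  proof (cases r)
    case (Leaf y)
    then have "x \<noteq> y" using "2.prems"(2) by (simp add: valid_tree_def)
    then show ?thesis using Leaf last_pair_snoc2[of "[]" x y] by (simp add: two_clades_Node leaves_def)
  next
    case (Node c d)
    have "2 \<le> length (leaves_list r)" using Node length_leaves_list_Node by simp
    then have "two_clades (Node (Leaf x) r) = two_clades r"
      using two_clades_Node_big[OF "2.prems"(2)] by simp
    moreover have "2 \<le> length (spine_order r)" using length_spine_order_Node r(1) Node by blast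
    ultimately show ?thesis using "2.IH"[OF r] by (simp add: last_pair_Cons)
  qed
next
  case (3 a b x)
  let ?l = "Node a b"
  have l: "caterpillar ?l" "valid_tree ?l" using "3.prems" valid_tree_NodeD by auto
  have "2 \<le> length (leaves_list ?l)" by (rule length_leaves_list_Node)
  then have "two_clades (Node ?l (Leaf x)) = two_clades ?l"
    using two_clades_Node_big[OF "3.prems"(2)] by simp
  then show ?case
    using "3.IH"[OF l] length_spine_order_Node[OF l(1)] by (simp add: last_pair_Cons)
next
  case 4
  from "4.prems"(1) show ?case by simp
qed

lemma two_clades_induced_caterpillar:
  assumes T: "caterpillar T" "valid_tree T"
  shows "two_clades_induced T Y = last_pair (filter (\<lambda>x. x \<in> Y) (spine_order T))"
proof (cases "induced T Y")
  case None
  then show ?thesis using filter_spine_order_eq_Nil[OF T(1) None] by (simp add: two_clades_induced_def)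
next
  case (Some T')
  have "valid_tree T'"
    using induced_leaves_list[where T = T and Y = Y] Some T(2) by (simp add: valid_tree_def)
  moreover note T' = induced_caterpillar[OF T(1) Some]
  ultimately have "two_clades T' = last_pair (spine_order T')" using two_clades_caterpillar by blast
  also have "\<dots> = last_pair (filter (\<lambda>x. x \<in> Y) (spine_order T))"
    using last_pair_eq_upto_last_swap T' by blast
  finally show ?thesis using Some by (simp add: two_clades_induced_def)
qed

lemma spine_order_caterpillar:
  assumes "caterpillar T" "valid_tree T"
  shows "set (spine_order T) = leaves T" "distinct (spine_order T)"
    "length (spine_order T) = card (leaves T)"
  using mset_eq_setD[OF mset_spine_order[OF assms(1)]] mset_eq_length[OF mset_spine_order[OF assms(1)]]
    mset_eq_imp_distinct_iff[OF mset_spine_order[OF assms(1)]] assms(2)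
  by (simp_all add: leaves_def valid_tree_def distinct_card)

lemma UE_model_caterpillar:
  assumes T: "caterpillar T" "valid_tree T"
  shows "UE_model \<kappa> T
       = {P \<in> prefix_model \<kappa> (spine_order T). (\<Sum>f\<in>idx (leaves T) \<kappa>. P f) = 1}"
proof -
  let ?xs = "spine_order T"
  note set_xs = spine_order_caterpillar(1)[OF T] and dist = spine_order_caterpillar(2)[OF T]
  have swap: "(\<forall>g\<in>idx Y \<kappa>. Q g = Q (g(a := g b, b := g a))) \<longleftrightarrow> swap_invariant \<kappa> Y a b Q"
    for Y a b Q by (auto simp: swap_invariant_def Fun.swap_def)
  have "(\<forall>Y \<subseteq> leaves T. \<forall>C \<in> two_clades_induced T Y. \<forall>a b. C = {a, b} \<longrightarrow>
          (\<forall>g \<in> idx Y \<kappa>. marg (leaves T) \<kappa> P Y g = marg (leaves T) \<kappa> P Y (g(a := g b, b := g a))))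
      \<longleftrightarrow> last_pair_symmetric \<kappa> ?xs P" for P
    unfolding swap two_clades_induced_caterpillar[OF T] last_pair_symmetric_def set_xs
      ball_last_pair_iff[OF swap_invariant_commute] ..
  then show ?thesis
    using prefix_symmetric_iff_last_pair_symmetric[OF dist]
    by (auto simp: UE_model_def prefix_model_def set_xs)
qed

theorem corollary4p3:
  fixes T :: "'a rtree" and \<kappa> n :: nat
  assumes "\<kappa> \<ge> 2"
    and "valid_tree T"
    and "caterpillar T"
    and "card (leaves T) = n"
    and "n \<ge> 1"
  shows "real (d_kappa \<kappa> T) = (real \<kappa> ^ n + real \<kappa>) / 2 - 1"
proof -
  let ?xs = "spine_order T"
  note spine = spine_order_caterpillar[OF assms(3,2)]
  have "d_kappa \<kappa> T + 1 = VS.dim (prefix_model \<kappa> ?xs)"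
    using affine_dimension_normalized_prefix_model[of \<kappa> ?xs] assms(1) spine(1)
    by (simp add: d_kappa_def UE_model_caterpillar[OF assms(3,2)])
  moreover have "2 * VS.dim (prefix_model \<kappa> ?xs) = \<kappa> ^ n + \<kappa>"
    using dim_prefix_model[OF spine(2), of \<kappa>] spine(3) assms(4,5) by fastforce
  ultimately have "2 * (d_kappa \<kappa> T + 1) = \<kappa> ^ n + \<kappa>" by simp
  then have "2 * (real (d_kappa \<kappa> T) + 1) = real \<kappa> ^ n + real \<kappa>"
    by (metis of_nat_1 of_nat_add of_nat_mult of_nat_numeral of_nat_power)
  then show ?thesis by (simp add: field_simps)
qed

end
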